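(* Let $n\ge1$, $d\ge0$, and let $A\subseteq\mathbb{F}_3^n$ be such that there are no $a,b,c\in A$ with $b\neq c$ and $a+b+c=0$. Let $P\in\mathbb{F}_3[x_1,\dots,x_n]$ be a polynomial of total degree at most $d$, with every variable occurring with exponent at most $2$, such that $P(x)=0$ for all $x\in\mathbb{F}_3^n\setminus A$. Then the number of $a\in A$ with $P(a)\neq0$ is at most $2\,|M(n,\lfloor d/2\rfloor)|$.
   Context: $\mathbb{F}_3$ is the field of integers modulo $3$. For integers $n\ge1$ and $e\ge 0$, $M(n,e)$ denotes the set of monomials $x_1^{\alpha_1}\cdots x_n^{\alpha_n}$ with $0\le\alpha_i\le2$ for all $i$ and $\alpha_1+\dots+\alpha_n\le e$; thus $|M(n,e)|=\sum_{i=0}^{e}\binom{n}{i}_2$, where $\binom{n}{i}_2$ is the coefficient of $x^i$ in $(1+x+x^2)^n$. *)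

theory Defs
  imports Main "HOL-Library.Numeral_Type"
begin

text \<open>F_3 is the type 3 (integers mod 3). A point of F_3^n is a function
nat => 3 vanishing outside {0..<n}.\<close>

definition F3vecs :: "nat \<Rightarrow> (nat \<Rightarrow> 3) set" where
  "F3vecs n = {x. \<forall>i\<ge>n. x i = 0}"

definition M :: "nat \<Rightarrow> nat \<Rightarrow> (nat \<Rightarrow> nat) set" where
  "M n e = {\<alpha>. (\<forall>i<n. \<alpha> i \<le> 2) \<and> (\<forall>i\<ge>n. \<alpha> i = 0) \<and> (\<Sum>i<n. \<alpha> i) \<le> e}"

text \<open>A polynomial of total degree at most d with every exponent at most 2 is
given by its coefficients c on the monomials M n d; its evaluation at x:\<close>

definition poly_eval :: "nat \<Rightarrow> nat \<Rightarrow> ((nat \<Rightarrow> nat) \<Rightarrow> 3) \<Rightarrow> (nat \<Rightarrow> 3) \<Rightarrow> 3" where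
  "poly_eval n d c x = (\<Sum>\<alpha>\<in>M n d. c \<alpha> * (\<Prod>i<n. x i ^ \<alpha> i))"

end

theory Submission
  imports Defs "HOL-Library.FuncSet" "HOL-Library.Function_Algebras"
begin

text \<open>Let S be the set of points of A where P does not vanish, and consider the
matrix T(x, y) = P(-(x + y)) on S \<times> S. For x \<noteq> y the point -(x + y) lies outside A
(otherwise -(x + y), x, y would be a forbidden triple), so T is diagonal, and its
diagonal entries P(-2y) = P(y) are nonzero. Expanding P(-(x + y)) gives monomials
x^\<alpha> y^\<beta> with deg \<alpha> + deg \<beta> \<le> d, so deg \<alpha> \<le> d div 2 or deg \<beta> \<le> d div 2; grouping
the terms accordingly writes T as a sum of 2 |M(n, d div 2)| products f(x) g(y).
A diagonal matrix with invertible diagonal has rank |S|, which gives the bound. The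
rank bound is proved by counting: v \<mapsto> (\<Sum>x. v(x) f_i(x))_i is injective on functions S \<rightarrow> F_3.\<close>

lemma card_le_of_unit_diagonal_factorization:
  fixes T :: "'x \<Rightarrow> 'x \<Rightarrow> 'a::{finite, comm_semiring_1}"
  assumes "finite S" "finite I"
    and factor: "\<And>x y. x \<in> S \<Longrightarrow> y \<in> S \<Longrightarrow> T x y = (\<Sum>i\<in>I. f i x * g i y)"
    and off_diagonal: "\<And>x y. x \<in> S \<Longrightarrow> y \<in> S \<Longrightarrow> x \<noteq> y \<Longrightarrow> T x y = 0"
    and diagonal: "\<And>y. y \<in> S \<Longrightarrow> T y y dvd 1"
  shows "card S \<le> card I"
proof -
  define \<Phi> where "\<Phi> v = restrict (\<lambda>i. \<Sum>x\<in>S. v x * f i x) I" for v :: "'x \<Rightarrow> 'a"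
  have contract: "v y * T y y = (\<Sum>i\<in>I. \<Phi> v i * g i y)" if "y \<in> S" for v y
  proof -
    have "v y * T y y = (\<Sum>x\<in>S. v x * T x y)"
      using \<open>finite S\<close> that off_diagonal by (simp add: sum.remove)
    also have "\<dots> = (\<Sum>i\<in>I. (\<Sum>x\<in>S. v x * f i x) * g i y)"
      using that by (simp add: factor sum_distrib_left sum_distrib_right mult.assoc sum.swap[of _ I])
    finally show ?thesis by (simp add: \<Phi>_def)
  qed
  have "inj_on \<Phi> (S \<rightarrow>\<^sub>E UNIV)"
  proof (rule inj_onI)
    fix v w assume v: "v \<in> S \<rightarrow>\<^sub>E UNIV" and w: "w \<in> S \<rightarrow>\<^sub>E UNIV" and "\<Phi> v = \<Phi> w"
    have "v y = w y" if y: "y \<in> S" for y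
    proof -
      obtain t where t: "1 = T y y * t" using diagonal[OF y] by (elim dvdE)
      have "v y * T y y = w y * T y y" using contract[OF y] \<open>\<Phi> v = \<Phi> w\<close> by simp
      then have "v y * T y y * t = w y * T y y * t" by simp
      then show ?thesis by (simp add: mult.assoc flip: t)
    qed
    then show "v = w" using PiE_ext[OF v w] by blast
  qed
  moreover have "\<Phi> ` (S \<rightarrow>\<^sub>E UNIV) \<subseteq> I \<rightarrow>\<^sub>E UNIV" by (auto simp: \<Phi>_def)
  ultimately have "card (S \<rightarrow>\<^sub>E (UNIV :: 'a set)) \<le> card (I \<rightarrow>\<^sub>E (UNIV :: 'a set))"
    using \<open>finite I\<close> by (intro card_inj_on_le) (auto intro: finite_PiE)
  then have "CARD('a) ^ card S \<le> CARD('a) ^ card I"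
    using assms(1,2) by (simp add: card_PiE)
  moreover have "1 < CARD('a)"
    using card_mono[of UNIV "{0, 1 :: 'a}"] by simp
  ultimately show ?thesis using power_le_imp_le_exp by blast
qed

lemma exhaust_3: "(u::3) = 0 \<or> u = 1 \<or> u = 2"
proof -
  have "{0, 1, 2 :: 3} = UNIV" by (rule card_subset_eq) (auto simp: card_insert_if)
  then show ?thesis by auto
qed

lemma dvd_one_3: "(u::3) \<noteq> 0 \<Longrightarrow> u dvd 1"
proof -
  assume "u \<noteq> 0"
  then have "u * u = 1" using exhaust_3[of u] by auto
  then show ?thesis by (metis dvd_triv_left)
qed

lemma neg_add_self_3: "-((u::3) + u) = u"
  using exhaust_3[of u] by auto

lemma finite_F3vecs: "finite (F3vecs n)"
proof -
  have "F3vecs n = {x. \<forall>i. (i \<in> {..<n} \<longrightarrow> x i \<in> UNIV) \<and> (i \<notin> {..<n} \<longrightarrow> x i = 0)}"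
    by (auto simp: F3vecs_def)
  then show ?thesis
    using finite_set_of_finite_funs[of "{..<n}" "UNIV :: 3 set" 0] by simp
qed

lemma finite_M: "finite (M n d)"
proof -
  have "M n d \<subseteq> {\<alpha>. \<forall>i. (i \<in> {..<n} \<longrightarrow> \<alpha> i \<in> {..2}) \<and> (i \<notin> {..<n} \<longrightarrow> \<alpha> i = 0)}"
    by (auto simp: M_def)
  then show ?thesis
    by (rule finite_subset) (intro finite_set_of_finite_funs; simp)
qed

lemma M_downward_closed: "\<beta> \<le> \<gamma> \<Longrightarrow> \<gamma> \<in> M n d \<Longrightarrow> \<beta> \<in> M n d"
  unfolding M_def le_fun_def
  by (auto intro: order_trans sum_mono order.trans[OF sum_mono]) (metis le_zero_eq)

lemma M_add_half_degree:
  assumes "\<alpha> + \<beta> \<in> M n d"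
  shows "\<alpha> \<in> M n (d div 2) \<or> \<beta> \<in> M n (d div 2)"
proof -
  have "(\<Sum>i<n. \<alpha> i) + (\<Sum>i<n. \<beta> i) \<le> d"
    using assms by (simp add: M_def sum.distrib)
  then have "(\<Sum>i<n. \<alpha> i) \<le> d div 2 \<or> (\<Sum>i<n. \<beta> i) \<le> d div 2"
    by linarith
  moreover have "\<alpha> \<in> M n d" "\<beta> \<in> M n d"
    using M_downward_closed[OF _ assms] by (simp_all add: le_fun_def)
  ultimately show ?thesis by (auto simp: M_def)
qed

definition monomial :: "nat \<Rightarrow> (nat \<Rightarrow> nat) \<Rightarrow> (nat \<Rightarrow> 'a::comm_monoid_mult) \<Rightarrow> 'a" where
  "monomial n \<alpha> x = (\<Prod>i<n. x i ^ \<alpha> i)"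

definition neg_binomial_coeff :: "nat \<Rightarrow> (nat \<Rightarrow> nat) \<Rightarrow> (nat \<Rightarrow> nat) \<Rightarrow> 'a::comm_ring_1" where
  "neg_binomial_coeff n \<gamma> \<beta> = (\<Prod>i<n. of_nat (\<gamma> i choose \<beta> i) * (-1) ^ \<gamma> i)"

lemma neg_add_power:
  fixes u v :: "'a::comm_ring_1"
  shows "(-(u + v)) ^ k = (\<Sum>j\<le>k. of_nat (k choose j) * (-1) ^ k * u ^ (k - j) * v ^ j)"
proof -
  have "(-(u + v)) ^ k = (-1) ^ k * (v + u) ^ k"
    by (simp flip: power_mult_distrib add: add.commute)
  also have "\<dots> = (\<Sum>j\<le>k. of_nat (k choose j) * (-1) ^ k * u ^ (k - j) * v ^ j)"
    unfolding binomial_ring[of v u] by (simp add: sum_distrib_left algebra_simps)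
  finally show ?thesis .
qed

lemma sum_le_fun_eq_sum_PiE:
  fixes \<gamma> :: "nat \<Rightarrow> nat"
  assumes "\<forall>i\<ge>n. \<gamma> i = 0"
  shows "(\<Sum>\<beta>\<in>{\<beta>. \<beta> \<le> \<gamma>}. F (restrict \<beta> {..<n})) = (\<Sum>h\<in>PiE {..<n} (\<lambda>i. {..\<gamma> i}). F h)"
  using assms
  by (intro sum.reindex_bij_witness[of _ "\<lambda>h i. if i < n then h i else 0" "\<lambda>\<beta>. restrict \<beta> {..<n}"])
     (auto simp: le_fun_def fun_eq_iff PiE_def extensional_def, metis le_zero_eq not_less)

lemma monomial_neg_add:
  fixes x y :: "nat \<Rightarrow> 'a::comm_ring_1"
  assumes "\<forall>i\<ge>n. \<gamma> i = 0"
  shows "monomial n \<gamma> (\<lambda>i. -(x i + y i))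
    = (\<Sum>\<beta>\<in>{\<beta>. \<beta> \<le> \<gamma>}. neg_binomial_coeff n \<gamma> \<beta> * monomial n (\<gamma> - \<beta>) x * monomial n \<beta> y)"
proof -
  have "monomial n \<gamma> (\<lambda>i. -(x i + y i))
      = (\<Prod>i<n. \<Sum>j\<le>\<gamma> i. of_nat (\<gamma> i choose j) * (-1) ^ \<gamma> i * x i ^ (\<gamma> i - j) * y i ^ j)"
    unfolding monomial_def by (rule prod.cong[OF refl neg_add_power])
  also have "\<dots> = (\<Sum>h\<in>PiE {..<n} (\<lambda>i. {..\<gamma> i}).
      \<Prod>i<n. of_nat (\<gamma> i choose h i) * (-1) ^ \<gamma> i * x i ^ (\<gamma> i - h i) * y i ^ h i)"
    by (simp add: prod_sum_PiE)
  also have "\<dots> = (\<Sum>\<beta>\<in>{\<beta>. \<beta> \<le> \<gamma>}.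
      \<Prod>i<n. of_nat (\<gamma> i choose \<beta> i) * (-1) ^ \<gamma> i * x i ^ (\<gamma> i - \<beta> i) * y i ^ \<beta> i)"
    using sum_le_fun_eq_sum_PiE[OF assms, where F = "\<lambda>h.
      \<Prod>i<n. of_nat (\<gamma> i choose h i) * (-1) ^ \<gamma> i * x i ^ (\<gamma> i - h i) * y i ^ h i"] by simp
  also have "\<dots> = (\<Sum>\<beta>\<in>{\<beta>. \<beta> \<le> \<gamma>}. neg_binomial_coeff n \<gamma> \<beta> * monomial n (\<gamma> - \<beta>) x * monomial n \<beta> y)"
    by (simp add: neg_binomial_coeff_def monomial_def prod.distrib)
  finally show ?thesis .
qed

lemma sum_le_fun_eq_sum_add_eq:
  assumes \<gamma>: "\<gamma> \<in> M n d"
  shows "(\<Sum>\<beta>\<in>{\<beta>. \<beta> \<le> \<gamma>}. F (\<gamma> - \<beta>) \<beta>)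
    = (\<Sum>\<alpha>\<in>M n d. \<Sum>\<beta>\<in>M n d. if \<alpha> + \<beta> = \<gamma> then F \<alpha> \<beta> else 0)"
proof -
  have "(\<Sum>\<beta>\<in>{\<beta>. \<beta> \<le> \<gamma>}. F (\<gamma> - \<beta>) \<beta>) = (\<Sum>\<beta>\<in>M n d. if \<beta> \<le> \<gamma> then F (\<gamma> - \<beta>) \<beta> else 0)"
    using \<gamma> by (intro sum.mono_neutral_cong_left finite_M) (auto intro: M_downward_closed)
  also have "\<dots> = (\<Sum>\<beta>\<in>M n d. \<Sum>\<alpha>\<in>M n d. if \<alpha> + \<beta> = \<gamma> then F \<alpha> \<beta> else 0)"
  proof (rule sum.cong[OF refl])
    fix \<beta>
    have "\<alpha> + \<beta> = \<gamma> \<longleftrightarrow> \<beta> \<le> \<gamma> \<and> \<gamma> - \<beta> = \<alpha>" for \<alpha>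
      unfolding fun_eq_iff le_fun_def
      by auto (metis le_add2, metis diff_add_inverse2, metis le_add_diff_inverse2)
    then have "(\<Sum>\<alpha>\<in>M n d. if \<alpha> + \<beta> = \<gamma> then F \<alpha> \<beta> else 0)
        = (\<Sum>\<alpha>\<in>M n d. if \<gamma> - \<beta> = \<alpha> then if \<beta> \<le> \<gamma> then F \<alpha> \<beta> else 0 else 0)"
      by (intro sum.cong refl) simp
    also have "\<dots> = (if \<beta> \<le> \<gamma> then F (\<gamma> - \<beta>) \<beta> else 0)"
      using M_downward_closed[OF _ \<gamma>, of "\<gamma> - \<beta>"] by (simp add: finite_M le_fun_def)
    finally show "(if \<beta> \<le> \<gamma> then F (\<gamma> - \<beta>) \<beta> else 0)
        = (\<Sum>\<alpha>\<in>M n d. if \<alpha> + \<beta> = \<gamma> then F \<alpha> \<beta> else 0)" ..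
  qed
  also have "\<dots> = (\<Sum>\<alpha>\<in>M n d. \<Sum>\<beta>\<in>M n d. if \<alpha> + \<beta> = \<gamma> then F \<alpha> \<beta> else 0)"
    by (rule sum.swap)
  finally show ?thesis .
qed

lemma poly_eval_neg_add:
  "poly_eval n d c (\<lambda>i. -(x i + y i)) = (\<Sum>\<alpha>\<in>M n d. \<Sum>\<beta>\<in>M n d.
     (if \<alpha> + \<beta> \<in> M n d then c (\<alpha> + \<beta>) * neg_binomial_coeff n (\<alpha> + \<beta>) \<beta> else 0)
       * monomial n \<alpha> x * monomial n \<beta> y)"
proof -
  define t where "t \<gamma> \<alpha> \<beta> = c \<gamma> * neg_binomial_coeff n \<gamma> \<beta> * monomial n \<alpha> x * monomial n \<beta> y"
    for \<gamma> \<alpha> \<beta>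
  have "poly_eval n d c z = (\<Sum>\<gamma>\<in>M n d. c \<gamma> * monomial n \<gamma> z)" for z
    by (simp add: poly_eval_def monomial_def)
  also have "\<dots> (\<lambda>i. -(x i + y i)) = (\<Sum>\<gamma>\<in>M n d. \<Sum>\<beta>\<in>{\<beta>. \<beta> \<le> \<gamma>}. t \<gamma> (\<gamma> - \<beta>) \<beta>)"
  proof (rule sum.cong[OF refl])
    fix \<gamma> assume "\<gamma> \<in> M n d"
    then have "\<forall>i\<ge>n. \<gamma> i = 0" by (simp add: M_def)
    then show "c \<gamma> * monomial n \<gamma> (\<lambda>i. -(x i + y i)) = (\<Sum>\<beta>\<in>{\<beta>. \<beta> \<le> \<gamma>}. t \<gamma> (\<gamma> - \<beta>) \<beta>)"
      by (simp only: t_def monomial_neg_add sum_distrib_left mult.assoc)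
  qed
  also have "\<dots> = (\<Sum>\<gamma>\<in>M n d. \<Sum>\<alpha>\<in>M n d. \<Sum>\<beta>\<in>M n d. if \<alpha> + \<beta> = \<gamma> then t \<gamma> \<alpha> \<beta> else 0)"
    by (rule sum.cong[OF refl], rule sum_le_fun_eq_sum_add_eq)
  also have "\<dots> = (\<Sum>\<alpha>\<in>M n d. \<Sum>\<beta>\<in>M n d. \<Sum>\<gamma>\<in>M n d. if \<alpha> + \<beta> = \<gamma> then t \<gamma> \<alpha> \<beta> else 0)"
    by (subst sum.swap) (rule sum.cong[OF refl], rule sum.swap)
  also have "\<dots> = (\<Sum>\<alpha>\<in>M n d. \<Sum>\<beta>\<in>M n d.
     (if \<alpha> + \<beta> \<in> M n d then c (\<alpha> + \<beta>) * neg_binomial_coeff n (\<alpha> + \<beta>) \<beta> else 0)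
       * monomial n \<alpha> x * monomial n \<beta> y)"
    by (intro sum.cong refl) (simp add: finite_M t_def)
  finally show ?thesis .
qed

lemma sum_M_pairs_split_half_degree:
  fixes K :: "(nat \<Rightarrow> nat) \<Rightarrow> (nat \<Rightarrow> nat) \<Rightarrow> 'a::comm_semiring_1"
  assumes "\<And>\<alpha> \<beta>. \<alpha> + \<beta> \<notin> M n d \<Longrightarrow> K \<alpha> \<beta> = 0"
  shows "(\<Sum>\<alpha>\<in>M n d. \<Sum>\<beta>\<in>M n d. K \<alpha> \<beta> * p \<alpha> * q \<beta>)
    = (\<Sum>\<alpha>\<in>M n (d div 2). p \<alpha> * (\<Sum>\<beta>\<in>M n d. K \<alpha> \<beta> * q \<beta>))
    + (\<Sum>\<beta>\<in>M n (d div 2). (\<Sum>\<alpha>\<in>M n d - M n (d div 2). K \<alpha> \<beta> * p \<alpha>) * q \<beta>)"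
proof -
  let ?e = "d div 2"
  have sub: "M n ?e \<subseteq> M n d" by (auto simp: M_def)
  have "(\<Sum>\<alpha>\<in>M n d. \<Sum>\<beta>\<in>M n d. K \<alpha> \<beta> * p \<alpha> * q \<beta>)
      = (\<Sum>\<alpha>\<in>M n ?e. \<Sum>\<beta>\<in>M n d. K \<alpha> \<beta> * p \<alpha> * q \<beta>)
      + (\<Sum>\<alpha>\<in>M n d - M n ?e. \<Sum>\<beta>\<in>M n d. K \<alpha> \<beta> * p \<alpha> * q \<beta>)"
    by (subst sum.subset_diff[OF sub finite_M]) (rule add.commute)
  also have "(\<Sum>\<alpha>\<in>M n d - M n ?e. \<Sum>\<beta>\<in>M n d. K \<alpha> \<beta> * p \<alpha> * q \<beta>)
      = (\<Sum>\<beta>\<in>M n d. \<Sum>\<alpha>\<in>M n d - M n ?e. K \<alpha> \<beta> * p \<alpha> * q \<beta>)"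
    by (rule sum.swap)
  also have "\<dots> = (\<Sum>\<beta>\<in>M n ?e. \<Sum>\<alpha>\<in>M n d - M n ?e. K \<alpha> \<beta> * p \<alpha> * q \<beta>)"
  proof (rule sum.mono_neutral_right[OF finite_M sub], intro ballI sum.neutral)
    fix \<beta> \<alpha> assume "\<beta> \<in> M n d - M n ?e" "\<alpha> \<in> M n d - M n ?e"
    then have "\<alpha> + \<beta> \<notin> M n d" using M_add_half_degree by blast
    then show "K \<alpha> \<beta> * p \<alpha> * q \<beta> = 0" by (simp add: assms)
  qed
  finally show ?thesis
    by (simp add: sum_distrib_left sum_distrib_right mult.assoc mult.left_commute)
qed

lemma poly_eval_neg_add_factorization:
  obtains f g where "\<And>x y. poly_eval n d c (\<lambda>i. -(x i + y i))
    = (\<Sum>i\<in>M n (d div 2) <+> M n (d div 2). f i x * g i y)"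
proof -
  define K where "K \<alpha> \<beta> = (if \<alpha> + \<beta> \<in> M n d then c (\<alpha> + \<beta>) * neg_binomial_coeff n (\<alpha> + \<beta>) \<beta> else 0)"
    for \<alpha> \<beta>
  define f where "f = case_sum (monomial n)
    (\<lambda>\<beta> x. \<Sum>\<alpha>\<in>M n d - M n (d div 2). K \<alpha> \<beta> * monomial n \<alpha> x)"
  define g where "g = case_sum (\<lambda>\<alpha> y. \<Sum>\<beta>\<in>M n d. K \<alpha> \<beta> * monomial n \<beta> y) (monomial n)"
  have "K \<alpha> \<beta> = 0" if "\<alpha> + \<beta> \<notin> M n d" for \<alpha> \<beta>
    using that by (simp add: K_def)
  note split = sum_M_pairs_split_half_degree[where K = K, OF this]
  have "poly_eval n d c (\<lambda>i. -(x i + y i)) = (\<Sum>i\<in>M n (d div 2) <+> M n (d div 2). f i x * g i y)"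
    for x y
    unfolding poly_eval_neg_add K_def[symmetric]
    using split[where p = "\<lambda>\<alpha>. monomial n \<alpha> x" and q = "\<lambda>\<beta>. monomial n \<beta> y"]
    by (simp add: f_def g_def sum.Plus finite_M)
  then show ?thesis by (rule that)
qed

theorem mainTheorem4:
  fixes n d :: nat and A :: "(nat \<Rightarrow> 3) set" and c :: "(nat \<Rightarrow> nat) \<Rightarrow> 3"
  assumes "n \<ge> 1"
    and "A \<subseteq> F3vecs n"
    and "\<forall>a\<in>A. \<forall>b\<in>A. \<forall>c'\<in>A. b \<noteq> c' \<longrightarrow> (\<exists>i. a i + b i + c' i \<noteq> 0)"
    and "\<forall>x\<in>F3vecs n - A. poly_eval n d c x = 0"
  shows "card {a\<in>A. poly_eval n d c a \<noteq> 0} \<le> 2 * card (M n (d div 2))"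
proof -
  define S where "S = {a\<in>A. poly_eval n d c a \<noteq> 0}"
  define T where "T x y = poly_eval n d c (\<lambda>i. -(x i + y i))" for x y
  obtain f g where factor: "\<And>x y. T x y = (\<Sum>i\<in>M n (d div 2) <+> M n (d div 2). f i x * g i y)"
    using poly_eval_neg_add_factorization[of n d c] unfolding T_def by blast
  have "finite S"
    using finite_subset[OF _ finite_F3vecs] assms(2) by (auto simp: S_def)
  have off_diagonal: "T x y = 0" if "x \<in> S" "y \<in> S" "x \<noteq> y" for x y
  proof -
    have "(\<lambda>i. -(x i + y i)) \<notin> A"
      using assms(3) that by (fastforce simp: S_def)
    moreover have "x \<in> F3vecs n" "y \<in> F3vecs n"
      using assms(2) that by (auto simp: S_def)
    then have "(\<lambda>i. -(x i + y i)) \<in> F3vecs n"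
      by (simp add: F3vecs_def)
    ultimately show ?thesis using assms(4) by (simp add: T_def)
  qed
  have diagonal: "T y y dvd 1" if "y \<in> S" for y
  proof -
    have "(\<lambda>i. -(y i + y i)) = y" by (simp only: neg_add_self_3)
    then show ?thesis using that by (simp add: T_def S_def dvd_one_3)
  qed
  have "card S \<le> card (M n (d div 2) <+> M n (d div 2))"
    using card_le_of_unit_diagonal_factorization[OF \<open>finite S\<close> _ factor off_diagonal diagonal]
    by (simp add: finite_M)
  then show ?thesis by (simp add: S_def card_Plus finite_M)
qed

end
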